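(* Let $M\in\mathbb R^{\mathbb N\times\mathbb N}$ belong to the Jaffard class $\mathcal J(d,\gamma,C)$ and be elliptic, i.e., there is $C_{\rm ell}>0$ with $Mx\cdot x\ge C_{\rm ell}\|x\|_{\ell_2}^2$ for all $x\in\ell_2$. Then $M$ has an $LU$-factorization $M=LU$ with $L$ lower triangular ($L_{ij}=0$ for $i<j$) and $U$ upper triangular ($U_{ij}=0$ for $i>j$) such that the entrywise moduli $|L|,|U|,|L^{-1}|,|U^{-1}|:\ell_2\to\ell_2$ are bounded operators.
   Context: Jaffard class: for a metric $d:\mathbb N\times\mathbb N\to[0,\infty)$ with $\sup_{i\in\mathbb N}\sum_{j\in\mathbb N}\exp(-\varepsilon d(i,j))<\infty$ for every $\varepsilon>0$, and $\gamma>0$, a matrix $M$ belongs to $\mathcal J(d,\gamma,C)$ if for every $0<\gamma'<\gamma$ there exists $C(\gamma')>0$ with $|M_{ij}|\le C(\gamma')\exp(-\gamma' d(i,j))$ for all $i,j$. *)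

theory Defs
  imports "HOL-Analysis.Analysis"
begin

type_synonym imat = "nat \<Rightarrow> nat \<Rightarrow> real"

definition is_metric_nat :: "(nat \<Rightarrow> nat \<Rightarrow> real) \<Rightarrow> bool" where
  "is_metric_nat d \<longleftrightarrow>
     (\<forall>i j. 0 \<le> d i j) \<and> (\<forall>i j. d i j = 0 \<longleftrightarrow> i = j) \<and>
     (\<forall>i j. d i j = d j i) \<and> (\<forall>i j k. d i k \<le> d i j + d j k)"

definition metric_summable :: "(nat \<Rightarrow> nat \<Rightarrow> real) \<Rightarrow> bool" where
  "metric_summable d \<longleftrightarrow>
     (\<forall>\<epsilon>>0. (\<forall>i. (\<lambda>j. exp (- \<epsilon> * d i j)) summable_on UNIV) \<and>
            bdd_above (range (\<lambda>i. \<Sum>\<^sub>\<infinity>j. exp (- \<epsilon> * d i j))))"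

definition jaffard :: "(nat \<Rightarrow> nat \<Rightarrow> real) \<Rightarrow> real \<Rightarrow> imat \<Rightarrow> bool" where
  "jaffard d \<gamma> M \<longleftrightarrow>
     (\<forall>\<gamma>'. 0 < \<gamma>' \<and> \<gamma>' < \<gamma> \<longrightarrow>
        (\<exists>C>0. \<forall>i j. \<bar>M i j\<bar> \<le> C * exp (- \<gamma>' * d i j)))"

definition ell2 :: "(nat \<Rightarrow> real) \<Rightarrow> bool" where
  "ell2 x \<longleftrightarrow> (\<lambda>i. (x i)\<^sup>2) summable_on UNIV"

definition ell2_normsq :: "(nat \<Rightarrow> real) \<Rightarrow> real" where
  "ell2_normsq x = (\<Sum>\<^sub>\<infinity>i. (x i)\<^sup>2)"

definition mat_vec :: "imat \<Rightarrow> (nat \<Rightarrow> real) \<Rightarrow> nat \<Rightarrow> real" where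
  "mat_vec A x = (\<lambda>i. \<Sum>\<^sub>\<infinity>j. A i j * x j)"

definition mat_mult :: "imat \<Rightarrow> imat \<Rightarrow> imat" where
  "mat_mult A B = (\<lambda>i j. \<Sum>\<^sub>\<infinity>k. A i k * B k j)"

definition id_mat :: imat where
  "id_mat = (\<lambda>i j. if i = j then 1 else 0)"

definition abs_mat :: "imat \<Rightarrow> imat" where
  "abs_mat A = (\<lambda>i j. \<bar>A i j\<bar>)"

definition elliptic :: "imat \<Rightarrow> real \<Rightarrow> bool" where
  "elliptic M c \<longleftrightarrow>
     (\<forall>x. ell2 x \<longrightarrow> (\<Sum>\<^sub>\<infinity>i. mat_vec M x i * x i) \<ge> c * ell2_normsq x)"

definition lower_tri :: "imat \<Rightarrow> bool" where
  "lower_tri L \<longleftrightarrow> (\<forall>i j. i < j \<longrightarrow> L i j = 0)"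

definition upper_tri :: "imat \<Rightarrow> bool" where
  "upper_tri U \<longleftrightarrow> (\<forall>i j. i > j \<longrightarrow> U i j = 0)"

definition bounded_l2 :: "imat \<Rightarrow> bool" where
  "bounded_l2 A \<longleftrightarrow>
     (\<exists>K\<ge>0. \<forall>x. ell2 x \<longrightarrow>
        (\<forall>i. (\<lambda>j. A i j * x j) summable_on UNIV) \<and>
        ell2 (mat_vec A x) \<and>
        ell2_normsq (mat_vec A x) \<le> K * ell2_normsq x)"

end

theory Submission
  imports Defs
begin

(* Doolittle's recursion gives M = L U with L unit lower and U upper triangular. The k-th
   pivot is the value of the quadratic form of the k-th finite section at a vector with k-th
   entry 1, so ellipticity keeps all pivots above C_ell and the recursion never breaks down.
   The columns of U^-1, and the rows of L^-1 divided by the pivots, solve finite section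
   systems (of M, resp. its transpose) with a unit vector on the right; a weighted energy
   estimate, conjugating by exp (eps d(., i0)) with eps small, shows that they decay
   exponentially at a uniform rate. As L = M U^-1 and U = L^-1 M, the factors decay
   exponentially as well, and by the Schur test an exponentially decaying matrix has
   entrywise modulus bounded on l2. *)

lemma infsum_finite_support:
  fixes f :: "'a \<Rightarrow> 'b::{comm_monoid_add,t2_space}"
  assumes "finite S" "\<And>j. j \<notin> S \<Longrightarrow> f j = 0"
  shows "infsum f UNIV = sum f S"
proof -
  have "infsum f UNIV = infsum f S"
    by (rule infsum_cong_neutral) (use assms in auto)
  then show ?thesis using assms(1) by simp
qed

lemma summable_on_finite_support:
  fixes f :: "'a \<Rightarrow> 'b::{comm_monoid_add,topological_space}"
  assumes "finite S" "\<And>j. j \<notin> S \<Longrightarrow> f j = 0"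
  shows "f summable_on UNIV"
proof -
  have "f summable_on S \<longleftrightarrow> f summable_on UNIV"
    by (rule summable_on_cong_neutral) (use assms in auto)
  then show ?thesis using assms(1) by simp
qed

lemma infsum_finite_sum:
  fixes f :: "'i \<Rightarrow> 'a \<Rightarrow> real"
  assumes "finite F" "\<And>i. i \<in> F \<Longrightarrow> f i summable_on UNIV"
  shows "(\<lambda>j. \<Sum>i\<in>F. f i j) summable_on UNIV" and "(\<Sum>\<^sub>\<infinity>j. \<Sum>i\<in>F. f i j) = (\<Sum>i\<in>F. infsum (f i) UNIV)"
  using assms by (induction F rule: finite_induct) (auto simp: summable_on_add infsum_add)

subsection \<open>Triangular matrices\<close>

lemma mat_mult_lower_tri: "lower_tri A \<Longrightarrow> mat_mult A B i j = (\<Sum>m\<le>i. A i m * B m j)"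
  unfolding mat_mult_def lower_tri_def by (rule infsum_finite_support) auto

lemma mat_mult_upper_tri: "upper_tri B \<Longrightarrow> mat_mult A B i j = (\<Sum>m\<le>j. A i m * B m j)"
  unfolding mat_mult_def upper_tri_def by (rule infsum_finite_support) auto

lemma lower_tri_mat_mult:
  assumes "lower_tri A" "lower_tri B"
  shows "lower_tri (mat_mult A B)"
  unfolding lower_tri_def
proof (intro allI impI)
  fix i j :: nat assume "i < j"
  then show "mat_mult A B i j = 0"
    using assms by (auto simp: mat_mult_lower_tri lower_tri_def intro!: sum.neutral)
qed

lemma mat_mult_id_right [simp]: "mat_mult A id_mat = A"
proof (intro ext)
  fix i j
  show "mat_mult A id_mat i j = A i j"
    unfolding mat_mult_def id_mat_def by (subst infsum_finite_support[of "{j}"]) auto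
qed

lemma mat_mult_id_left [simp]: "mat_mult id_mat A = A"
proof (intro ext)
  fix i j
  show "mat_mult id_mat A i j = A i j"
    unfolding mat_mult_def id_mat_def by (subst infsum_finite_support[of "{i}"]) auto
qed

text \<open>\<open>mat_mult\<close> sums infinitely many products (with junk value \<open>0\<close> when the sum does not
  converge), so associativity is only available where triangularity makes the sums finite.\<close>

lemma mat_mult_assoc_lower_tri:
  assumes A: "lower_tri A" and B: "lower_tri B"
  shows "mat_mult (mat_mult A B) C = mat_mult A (mat_mult B C)"
proof (intro ext)
  fix i j
  have "mat_mult (mat_mult A B) C i j = (\<Sum>k\<le>i. \<Sum>m\<le>i. A i m * B m k * C k j)"
    using A B lower_tri_mat_mult[OF A B] by (simp add: mat_mult_lower_tri sum_distrib_right)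
  also have "\<dots> = (\<Sum>m\<le>i. \<Sum>k\<le>i. A i m * B m k * C k j)"
    by (rule sum.swap)
  also have "\<dots> = (\<Sum>m\<le>i. A i m * (\<Sum>k\<le>m. B m k * C k j))"
  proof (rule sum.cong[OF refl])
    fix m assume "m \<in> {..i}"
    then have "(\<Sum>k\<le>i. A i m * B m k * C k j) = (\<Sum>k\<le>m. A i m * B m k * C k j)"
      using B by (intro sum.mono_neutral_right) (auto simp: lower_tri_def)
    then show "(\<Sum>k\<le>i. A i m * B m k * C k j) = A i m * (\<Sum>k\<le>m. B m k * C k j)"
      by (simp add: sum_distrib_left mult.assoc)
  qed
  also have "\<dots> = mat_mult A (mat_mult B C) i j"
    using A B by (simp add: mat_mult_lower_tri)
  finally show "mat_mult (mat_mult A B) C i j = mat_mult A (mat_mult B C) i j" .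
qed

definition mat_transpose :: "imat \<Rightarrow> imat" where
  "mat_transpose A = (\<lambda>i j. A j i)"

lemma mat_transpose_mat_mult: "mat_transpose (mat_mult A B) = mat_mult (mat_transpose B) (mat_transpose A)"
  unfolding mat_transpose_def mat_mult_def by (simp add: mult.commute)

lemma mat_transpose_transpose [simp]: "mat_transpose (mat_transpose A) = A"
  unfolding mat_transpose_def by simp

lemma mat_transpose_id_mat [simp]: "mat_transpose id_mat = id_mat"
  unfolding mat_transpose_def id_mat_def by (auto intro!: ext)

lemma lower_tri_transpose_iff [simp]: "lower_tri (mat_transpose A) \<longleftrightarrow> upper_tri A"
  unfolding mat_transpose_def upper_tri_def lower_tri_def by auto

lemma mat_mult_assoc_upper_tri:
  assumes "upper_tri B" "upper_tri C"
  shows "mat_mult (mat_mult A B) C = mat_mult A (mat_mult B C)"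
proof -
  have "mat_transpose (mat_mult (mat_mult A B) C) = mat_transpose (mat_mult A (mat_mult B C))"
    using mat_mult_assoc_lower_tri[of "mat_transpose C" "mat_transpose B" "mat_transpose A"] assms
    by (simp add: mat_transpose_mat_mult)
  then show ?thesis by (metis mat_transpose_transpose)
qed

function lower_inverse :: "imat \<Rightarrow> nat \<Rightarrow> nat \<Rightarrow> real" where
  "lower_inverse T i j = (if i < j then 0 else if i = j then 1 / T j j
      else - (\<Sum>m\<in>{j..<i}. T i m * lower_inverse T m j) / T i i)"
  by auto
termination by (relation "Wellfounded.measure (\<lambda>(T, i, j). i)") auto

declare lower_inverse.simps [simp del]

lemma lower_tri_lower_inverse: "lower_tri (lower_inverse T)"
  unfolding lower_tri_def by (subst lower_inverse.simps) auto

lemma mat_mult_lower_inverse: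
  assumes T: "lower_tri T" and diag: "\<And>k. T k k \<noteq> 0"
  shows "mat_mult T (lower_inverse T) = id_mat"
proof (intro ext)
  fix i j
  let ?t = "\<lambda>m. T i m * lower_inverse T m j"
  have below: "?t m = 0" if "m < j" for m
    using lower_tri_lower_inverse[of T] that by (simp add: lower_tri_def)
  show "mat_mult T (lower_inverse T) i j = id_mat i j"
  proof (cases "j \<le> i")
    case True
    have "{..i} = insert i ({j..<i} \<union> {..<j})" using True by auto
    then have "sum ?t {..i} = ?t i + sum ?t ({j..<i} \<union> {..<j})" using True by simp
    moreover have "sum ?t ({j..<i} \<union> {..<j}) = sum ?t {j..<i}"
      by (subst sum.union_disjoint) (auto simp: below)
    moreover have "T i i * lower_inverse T i j = (if i = j then 1 else - sum ?t {j..<i})"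
      using diag[of i] by (subst lower_inverse.simps) auto
    ultimately show ?thesis using T by (simp add: mat_mult_lower_tri id_mat_def)
  qed (use T below in \<open>auto simp: mat_mult_lower_tri id_mat_def intro!: sum.neutral\<close>)
qed

lemma diag_mat_mult_lower_tri:
  assumes "lower_tri A" "lower_tri B"
  shows "mat_mult A B k k = A k k * B k k"
proof -
  have "(\<Sum>m\<le>k. A k m * B m k) = (\<Sum>m\<in>{k}. A k m * B m k)"
    by (rule sum.mono_neutral_right) (use assms in \<open>auto simp: lower_tri_def\<close>)
  then show ?thesis using assms by (simp add: mat_mult_lower_tri)
qed

lemma lower_tri_inverse_commute:
  assumes A: "lower_tri A" and B: "lower_tri B" and AB: "mat_mult A B = id_mat"
  shows "mat_mult B A = id_mat"
proof -
  have diag: "B k k \<noteq> 0" for k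
    using diag_mat_mult_lower_tri[OF A B, of k] AB by (auto simp: id_mat_def)
  let ?R = "lower_inverse B"
  have BR: "mat_mult B ?R = id_mat" by (rule mat_mult_lower_inverse[OF B diag])
  have "A = mat_mult (mat_mult A B) ?R"
    by (simp add: mat_mult_assoc_lower_tri[OF A B] BR)
  also have "\<dots> = ?R" by (simp add: AB)
  finally show ?thesis using BR by simp
qed

lemma upper_tri_inverse_commute:
  assumes "upper_tri A" "upper_tri B" "mat_mult A B = id_mat"
  shows "mat_mult B A = id_mat"
proof -
  have "mat_mult (mat_transpose A) (mat_transpose B) = id_mat"
    using lower_tri_inverse_commute[of "mat_transpose B" "mat_transpose A"] assms
    by (simp add: mat_transpose_mat_mult[symmetric])
  then have "mat_transpose (mat_mult B A) = mat_transpose id_mat"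
    by (simp add: mat_transpose_mat_mult)
  then show ?thesis by (metis mat_transpose_transpose)
qed

function back_subst :: "imat \<Rightarrow> nat \<Rightarrow> nat \<Rightarrow> real" where
  "back_subst U k i = (if k < i then 0 else if i = k then 1
     else - (\<Sum>m\<in>{i<..k}. U i m * back_subst U k m) / U i i)"
  by auto
termination by (relation "Wellfounded.measure (\<lambda>(U, k, i). k - i)") auto

declare back_subst.simps [simp del]

lemma back_subst_self [simp]: "back_subst U k k = 1"
  by (simp add: back_subst.simps)

lemma upper_tri_mult_back_subst:
  assumes U: "upper_tri U" and pivots: "\<And>m. m < k \<Longrightarrow> U m m \<noteq> 0" and "m \<le> k"
  shows "(\<Sum>j\<le>k. U m j * back_subst U k j) = (if m = k then U k k else 0)"
proof -
  have "(\<Sum>j\<le>k. U m j * back_subst U k j) = (\<Sum>j\<in>insert m {m<..k}. U m j * back_subst U k j)"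
    by (rule sum.mono_neutral_right) (use U \<open>m \<le> k\<close> in \<open>auto simp: upper_tri_def\<close>)
  also have "\<dots> = U m m * back_subst U k m + (\<Sum>j\<in>{m<..k}. U m j * back_subst U k j)"
    by simp
  also have "\<dots> = (if m = k then U k k else 0)"
  proof (cases "m = k")
    case False
    with \<open>m \<le> k\<close> have "U m m \<noteq> 0" "m < k" using pivots by auto
    then show ?thesis by (subst back_subst.simps) simp
  qed simp
  finally show ?thesis .
qed

definition upper_inverse :: "imat \<Rightarrow> imat" where
  "upper_inverse U = (\<lambda>i j. back_subst U j i / U j j)"

lemma upper_tri_upper_inverse: "upper_tri (upper_inverse U)"
  unfolding upper_tri_def upper_inverse_def by (auto simp: back_subst.simps)

lemma mat_mult_upper_inverse:
  assumes U: "upper_tri U" and diag: "\<And>k. U k k \<noteq> 0"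
  shows "mat_mult U (upper_inverse U) = id_mat"
proof (intro ext)
  fix i j
  have "mat_mult U (upper_inverse U) i j = (\<Sum>m\<le>j. U i m * back_subst U j m) / U j j"
    unfolding mat_mult_upper_tri[OF upper_tri_upper_inverse]
    by (simp add: upper_inverse_def sum_divide_distrib)
  also have "\<dots> = id_mat i j"
  proof (cases "i \<le> j")
    case False
    then have "(\<Sum>m\<le>j. U i m * back_subst U j m) = 0"
      using U by (intro sum.neutral) (auto simp: upper_tri_def)
    then show ?thesis using False by (simp add: id_mat_def)
  qed (use upper_tri_mult_back_subst[OF U diag] diag in \<open>auto simp: id_mat_def\<close>)
  finally show "mat_mult U (upper_inverse U) i j = id_mat i j" .
qed

subsection \<open>Doolittle factorization\<close>

function doolittle :: "imat \<Rightarrow> nat \<Rightarrow> nat \<Rightarrow> real" where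
  "doolittle M i j = (if i \<le> j then M i j - (\<Sum>m<i. doolittle M i m * doolittle M m j)
     else (M i j - (\<Sum>m<j. doolittle M i m * doolittle M m j)) / doolittle M j j)"
  by auto
termination
  by (relation "measures [\<lambda>(M, i, j). min i j, \<lambda>(M, i, j). if i \<le> j then 0 else 1]") auto

declare doolittle.simps [simp del]

text \<open>Doolittle's compact scheme: \<open>doolittle M\<close> holds the strict lower part of the unit
  lower factor and the upper factor in one array.\<close>

definition doolittle_lower :: "imat \<Rightarrow> imat" where
  "doolittle_lower M i j = (if i = j then 1 else if j < i then doolittle M i j else 0)"

definition doolittle_upper :: "imat \<Rightarrow> imat" where
  "doolittle_upper M i j = (if i \<le> j then doolittle M i j else 0)"

lemma lower_tri_doolittle_lower: "lower_tri (doolittle_lower M)"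
  unfolding lower_tri_def doolittle_lower_def by auto

lemma upper_tri_doolittle_upper: "upper_tri (doolittle_upper M)"
  unfolding upper_tri_def doolittle_upper_def by auto

lemma doolittle_lower_diag [simp]: "doolittle_lower M k k = 1"
  by (simp add: doolittle_lower_def)

lemma doolittle_upper_diag [simp]: "doolittle_upper M k k = doolittle M k k"
  by (simp add: doolittle_upper_def)

lemma doolittle_entry:
  assumes "i \<le> j \<or> doolittle M j j \<noteq> 0"
  shows "M i j = (\<Sum>m\<le>i. doolittle_lower M i m * doolittle_upper M m j)"
proof -
  let ?p = "\<lambda>m. doolittle_lower M i m * doolittle_upper M m j"
  let ?n = "min i j"
  have "(\<Sum>m\<le>i. ?p m) = (\<Sum>m\<le>?n. ?p m)"
    by (rule sum.mono_neutral_right) (auto simp: doolittle_upper_def)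
  also have "\<dots> = (\<Sum>m<?n. doolittle M i m * doolittle M m j) + ?p ?n"
    by (simp add: lessThan_Suc_atMost[symmetric] doolittle_lower_def doolittle_upper_def)
  also have "\<dots> = M i j"
  proof (cases "i \<le> j")
    case True
    then have "doolittle M i j = M i j - (\<Sum>m<i. doolittle M i m * doolittle M m j)"
      by (subst doolittle.simps) simp
    with True show ?thesis by (simp add: doolittle_lower_def doolittle_upper_def min_def)
  next
    case False
    then have "doolittle M i j * doolittle M j j = M i j - (\<Sum>m<j. doolittle M i m * doolittle M m j)"
      using assms by (subst doolittle.simps) simp
    with False show ?thesis by (simp add: doolittle_lower_def doolittle_upper_def min_def)
  qed
  finally show ?thesis by simp
qed

lemma doolittle_factorization:
  assumes "\<And>k. doolittle M k k \<noteq> 0"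
  shows "M = mat_mult (doolittle_lower M) (doolittle_upper M)"
proof (intro ext)
  fix i j
  show "M i j = mat_mult (doolittle_lower M) (doolittle_upper M) i j"
    using doolittle_entry assms by (simp add: mat_mult_lower_tri[OF lower_tri_doolittle_lower])
qed

lemma section_mult_back_subst:
  assumes pivots: "\<And>m. m < k \<Longrightarrow> doolittle M m m \<noteq> 0" and "i \<le> k"
  shows "(\<Sum>j\<le>k. M i j * back_subst (doolittle_upper M) k j) = (if i = k then doolittle M k k else 0)"
proof -
  let ?L = "doolittle_lower M" and ?U = "doolittle_upper M"
  have "M i j = (\<Sum>m\<le>i. ?L i m * ?U m j)" if "j \<le> k" for j
    using doolittle_entry pivots \<open>i \<le> k\<close> that by (metis le_neq_implies_less)
  then have "(\<Sum>j\<le>k. M i j * back_subst ?U k j) = (\<Sum>j\<le>k. \<Sum>m\<le>i. ?L i m * ?U m j * back_subst ?U k j)"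
    by (intro sum.cong) (auto simp: sum_distrib_right)
  also have "\<dots> = (\<Sum>m\<le>i. ?L i m * (\<Sum>j\<le>k. ?U m j * back_subst ?U k j))"
    by (subst sum.swap) (simp add: sum_distrib_left mult.assoc)
  also have "\<dots> = (\<Sum>m\<le>i. if m = k then ?L i m * doolittle M k k else 0)"
    using upper_tri_mult_back_subst[OF upper_tri_doolittle_upper] pivots \<open>i \<le> k\<close>
    by (intro sum.cong) auto
  also have "\<dots> = (if i = k then doolittle M k k else 0)"
    using \<open>i \<le> k\<close> by auto
  finally show ?thesis .
qed

definition section_elliptic :: "imat \<Rightarrow> nat \<Rightarrow> real \<Rightarrow> bool" where
  "section_elliptic A k c \<longleftrightarrow>
     (\<forall>x. c * (\<Sum>i\<le>k. (x i)\<^sup>2) \<le> (\<Sum>i\<le>k. x i * (\<Sum>j\<le>k. A i j * x j)))"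

lemma elliptic_imp_section_elliptic:
  assumes "elliptic M c"
  shows "section_elliptic M k c"
  unfolding section_elliptic_def
proof
  fix x :: "nat \<Rightarrow> real"
  define x' where "x' i = (if i \<le> k then x i else 0)" for i
  have "ell2 x'"
    unfolding ell2_def by (rule summable_on_finite_support[of "{..k}"]) (auto simp: x'_def)
  then have "c * ell2_normsq x' \<le> (\<Sum>\<^sub>\<infinity>i. mat_vec M x' i * x' i)"
    using assms unfolding elliptic_def by blast
  moreover have "mat_vec M x' i = (\<Sum>j\<le>k. M i j * x j)" for i
    unfolding mat_vec_def by (subst infsum_finite_support[of "{..k}"]) (auto simp: x'_def)
  then have "(\<Sum>\<^sub>\<infinity>i. mat_vec M x' i * x' i) = (\<Sum>i\<le>k. x i * (\<Sum>j\<le>k. M i j * x j))"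
    by (subst infsum_finite_support[of "{..k}"]) (auto simp: x'_def mult.commute)
  moreover have "ell2_normsq x' = (\<Sum>i\<le>k. (x i)\<^sup>2)"
    unfolding ell2_normsq_def by (subst infsum_finite_support[of "{..k}"]) (auto simp: x'_def)
  ultimately show "c * (\<Sum>i\<le>k. (x i)\<^sup>2) \<le> (\<Sum>i\<le>k. x i * (\<Sum>j\<le>k. M i j * x j))"
    by simp
qed

lemma section_elliptic_transpose:
  assumes "section_elliptic A k c"
  shows "section_elliptic (mat_transpose A) k c"
proof -
  have "(\<Sum>i\<le>k. x i * (\<Sum>j\<le>k. A j i * x j)) = (\<Sum>i\<le>k. x i * (\<Sum>j\<le>k. A i j * x j))" for x
  proof -
    have "(\<Sum>i\<le>k. x i * (\<Sum>j\<le>k. A j i * x j)) = (\<Sum>i\<le>k. \<Sum>j\<le>k. x j * (A j i * x i))"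
      by (simp add: sum_distrib_left mult_ac)
    also have "\<dots> = (\<Sum>i\<le>k. x i * (\<Sum>j\<le>k. A i j * x j))"
      by (subst sum.swap) (simp add: sum_distrib_left)
    finally show ?thesis .
  qed
  then show ?thesis using assms by (simp add: section_elliptic_def mat_transpose_def)
qed

text \<open>The pivot \<open>doolittle M k k\<close> is the value of the quadratic form of the \<open>k\<close>-th section at
  \<open>back_subst\<close>, a vector whose \<open>k\<close>-th entry is \<open>1\<close>.\<close>

lemma doolittle_pivot_ge:
  assumes "elliptic M c" "c > 0"
  shows "c \<le> doolittle M k k"
proof (induction k rule: less_induct)
  case (less k)
  let ?x = "back_subst (doolittle_upper M) k"
  have pivots: "doolittle M m m \<noteq> 0" if "m < k" for m
    using less[OF that] \<open>c > 0\<close> by auto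
  have "(\<Sum>i\<le>k. ?x i * (\<Sum>j\<le>k. M i j * ?x j)) = (\<Sum>i\<le>k. if i = k then doolittle M k k else 0)"
    using section_mult_back_subst[OF pivots] by (intro sum.cong) auto
  then have form: "(\<Sum>i\<le>k. ?x i * (\<Sum>j\<le>k. M i j * ?x j)) = doolittle M k k"
    by simp
  have "1 \<le> (\<Sum>i\<le>k. (?x i)\<^sup>2)"
    using sum_mono2[of "{..k}" "{k}" "\<lambda>i. (?x i)\<^sup>2"] by simp
  then have "c \<le> c * (\<Sum>i\<le>k. (?x i)\<^sup>2)" using \<open>c > 0\<close> by simp
  also have "\<dots> \<le> (\<Sum>i\<le>k. ?x i * (\<Sum>j\<le>k. M i j * ?x j))"
    using elliptic_imp_section_elliptic[OF assms(1)] unfolding section_elliptic_def by blast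
  finally show ?case using form by simp
qed

subsection \<open>The Schur test\<close>

lemma square_le_mult_if_amgm:
  fixes s R T :: real
  assumes "0 \<le> s" "0 \<le> R" "0 \<le> T" and amgm: "\<And>l. l > 0 \<Longrightarrow> 2 * s \<le> l * R + T / l"
  shows "s\<^sup>2 \<le> R * T"
proof (cases "s = 0")
  case False
  with \<open>0 \<le> s\<close> have s: "s > 0" by simp
  show ?thesis
  proof (cases "R = 0")
    case True
    have "2 * s \<le> T / ((T + 1) / s)" using amgm[of "(T + 1) / s"] s \<open>0 \<le> T\<close> True by simp
    also have "\<dots> < s" using s \<open>0 \<le> T\<close> by (simp add: field_simps)
    finally show ?thesis using s by simp
  next
    case False
    with \<open>0 \<le> R\<close> have "R > 0" by simp
    have "2 * s \<le> s + T * R / s" using amgm[of "s / R"] s \<open>R > 0\<close> by (simp add: field_simps)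
    then show ?thesis using s by (simp add: field_simps power2_eq_square)
  qed
qed (use assms in simp)

lemma infsum_weighted_cauchy_schwarz:
  fixes a x :: "'a \<Rightarrow> real"
  assumes a: "\<And>j. 0 \<le> a j" "a summable_on UNIV" and ax: "(\<lambda>j. a j * (x j)\<^sup>2) summable_on UNIV"
  shows "(\<lambda>j. a j * \<bar>x j\<bar>) summable_on UNIV"
    and "(\<Sum>\<^sub>\<infinity>j. a j * \<bar>x j\<bar>)\<^sup>2 \<le> (\<Sum>\<^sub>\<infinity>j. a j) * (\<Sum>\<^sub>\<infinity>j. a j * (x j)\<^sup>2)"
proof -
  have amgm: "2 * (a j * \<bar>x j\<bar>) \<le> l * a j + inverse l * (a j * (x j)\<^sup>2)" if "l > 0" for l j
  proof -
    have "0 \<le> inverse l * (a j * (l - \<bar>x j\<bar>)\<^sup>2)" using a(1) that by simp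
    also have "\<dots> = l * a j + inverse l * (a j * (x j)\<^sup>2) - 2 * (a j * \<bar>x j\<bar>)"
      using that by (simp add: power2_eq_square field_simps)
    finally show ?thesis by simp
  qed
  have bound_summable: "(\<lambda>j. l * a j + inverse l * (a j * (x j)\<^sup>2)) summable_on UNIV" for l
    by (intro summable_on_add summable_on_cmult_right a ax)
  show summable: "(\<lambda>j. a j * \<bar>x j\<bar>) summable_on UNIV"
  proof (rule summable_on_comparison_test[OF bound_summable[of 1]])
    fix j
    have "0 \<le> a j * \<bar>x j\<bar>" using a(1) by simp
    then show "a j * \<bar>x j\<bar> \<le> 1 * a j + inverse 1 * (a j * (x j)\<^sup>2)"
      using amgm[of 1 j] by linarith
  qed (use a(1) in simp)
  show "(\<Sum>\<^sub>\<infinity>j. a j * \<bar>x j\<bar>)\<^sup>2 \<le> (\<Sum>\<^sub>\<infinity>j. a j) * (\<Sum>\<^sub>\<infinity>j. a j * (x j)\<^sup>2)"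
  proof (rule square_le_mult_if_amgm)
    fix l :: real assume "l > 0"
    have "(\<Sum>\<^sub>\<infinity>j. 2 * (a j * \<bar>x j\<bar>)) \<le> (\<Sum>\<^sub>\<infinity>j. l * a j + inverse l * (a j * (x j)\<^sup>2))"
      by (rule infsum_mono) (use amgm[OF \<open>l > 0\<close>] summable bound_summable in \<open>auto intro: summable_on_cmult_right\<close>)
    moreover have "(\<Sum>\<^sub>\<infinity>j. 2 * (a j * \<bar>x j\<bar>)) = 2 * (\<Sum>\<^sub>\<infinity>j. a j * \<bar>x j\<bar>)"
      using summable by (rule infsum_cmult_right)
    moreover have "(\<Sum>\<^sub>\<infinity>j. l * a j + inverse l * (a j * (x j)\<^sup>2))
        = l * (\<Sum>\<^sub>\<infinity>j. a j) + inverse l * (\<Sum>\<^sub>\<infinity>j. a j * (x j)\<^sup>2)"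
      using a(2) ax by (simp add: infsum_add summable_on_cmult_right infsum_cmult_right)
    ultimately show "2 * (\<Sum>\<^sub>\<infinity>j. a j * \<bar>x j\<bar>) \<le> l * (\<Sum>\<^sub>\<infinity>j. a j) + (\<Sum>\<^sub>\<infinity>j. a j * (x j)\<^sup>2) / l"
      by (simp add: divide_inverse mult.commute)
  qed (use a in \<open>auto intro: infsum_nonneg\<close>)
qed

lemma schur_test:
  fixes A :: imat
  assumes row_summable: "\<And>i. (\<lambda>j. \<bar>A i j\<bar>) summable_on UNIV"
    and row_bound: "\<And>i. (\<Sum>\<^sub>\<infinity>j. \<bar>A i j\<bar>) \<le> R"
    and column_bound: "\<And>j F. finite F \<Longrightarrow> (\<Sum>i\<in>F. \<bar>A i j\<bar>) \<le> R"
  shows "bounded_l2 A"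
  unfolding bounded_l2_def
proof (intro exI[of _ "R * R"] conjI allI impI)
  have entry: "\<bar>A i j\<bar> \<le> R" for i j
  proof -
    have "(\<Sum>l\<in>{j}. \<bar>A i l\<bar>) \<le> (\<Sum>\<^sub>\<infinity>l. \<bar>A i l\<bar>)"
      by (rule finite_sum_le_infsum[OF row_summable]) auto
    then show ?thesis using row_bound[of i] by simp
  qed
  show "0 \<le> R * R" by simp
  have "0 \<le> R" using entry[of 0 0] by linarith
  fix x assume "ell2 x"
  then have x: "(\<lambda>j. (x j)\<^sup>2) summable_on UNIV" by (simp add: ell2_def)
  define T where "T i = (\<Sum>\<^sub>\<infinity>j. \<bar>A i j\<bar> * (x j)\<^sup>2)" for i
  have weighted: "(\<lambda>j. \<bar>A i j\<bar> * (x j)\<^sup>2) summable_on UNIV" for i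
    by (rule summable_on_comparison_test[OF summable_on_cmult_right[OF x, of R]])
      (simp_all add: mult_right_mono entry)
  note cauchy_schwarz = infsum_weighted_cauchy_schwarz[OF _ row_summable weighted]
  have abs_summable: "(\<lambda>j. norm (A i j * x j)) summable_on UNIV" for i
    using cauchy_schwarz(1) by (simp add: abs_mult)
  then show "(\<lambda>j. A i j * x j) summable_on UNIV" for i
    by (rule summable_on_iff_abs_summable_on_real[THEN iffD2])
  have square: "(mat_vec A x i)\<^sup>2 \<le> R * T i" for i
  proof -
    have "\<bar>mat_vec A x i\<bar> = norm (\<Sum>\<^sub>\<infinity>j. A i j * x j)"
      by (simp add: mat_vec_def)
    also have "\<dots> \<le> (\<Sum>\<^sub>\<infinity>j. norm (A i j * x j))"
      by (rule norm_infsum_bound[OF abs_summable])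
    finally have "\<bar>mat_vec A x i\<bar> \<le> (\<Sum>\<^sub>\<infinity>j. \<bar>A i j\<bar> * \<bar>x j\<bar>)"
      by (simp add: abs_mult)
    then have "(mat_vec A x i)\<^sup>2 \<le> (\<Sum>\<^sub>\<infinity>j. \<bar>A i j\<bar> * \<bar>x j\<bar>)\<^sup>2"
      by (metis abs_ge_zero power2_abs power_mono)
    also have "\<dots> \<le> (\<Sum>\<^sub>\<infinity>j. \<bar>A i j\<bar>) * T i"
      using cauchy_schwarz(2) by (simp add: T_def)
    also have "\<dots> \<le> R * T i"
      by (rule mult_right_mono[OF row_bound]) (simp add: T_def infsum_nonneg)
    finally show ?thesis .
  qed
  have partial_sums: "(\<Sum>i\<in>F. (mat_vec A x i)\<^sup>2) \<le> R * R * ell2_normsq x" if "finite F" for F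
  proof -
    have "(\<Sum>i\<in>F. (mat_vec A x i)\<^sup>2) \<le> R * (\<Sum>i\<in>F. T i)"
      unfolding sum_distrib_left by (rule sum_mono) (rule square)
    also have "(\<Sum>i\<in>F. T i) = (\<Sum>\<^sub>\<infinity>j. \<Sum>i\<in>F. \<bar>A i j\<bar> * (x j)\<^sup>2)"
      using infsum_finite_sum(2)[OF that, of "\<lambda>i j. \<bar>A i j\<bar> * (x j)\<^sup>2"] weighted by (simp add: T_def)
    also have "\<dots> \<le> (\<Sum>\<^sub>\<infinity>j. R * (x j)\<^sup>2)"
    proof (rule infsum_mono)
      show "(\<lambda>j. \<Sum>i\<in>F. \<bar>A i j\<bar> * (x j)\<^sup>2) summable_on UNIV"
        by (rule infsum_finite_sum(1)[OF that weighted])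
      show "(\<Sum>i\<in>F. \<bar>A i j\<bar> * (x j)\<^sup>2) \<le> R * (x j)\<^sup>2" for j
        using column_bound[OF that, of j] by (simp add: sum_distrib_right[symmetric] mult_right_mono)
    qed (use x in \<open>rule summable_on_cmult_right\<close>)
    also have "\<dots> = R * ell2_normsq x"
      unfolding ell2_normsq_def by (rule infsum_cmult_right) (use x in simp)
    finally show ?thesis using \<open>0 \<le> R\<close> by (simp add: mult_left_mono mult.assoc)
  qed
  have summable: "(\<lambda>i. (mat_vec A x i)\<^sup>2) summable_on UNIV"
    by (rule nonneg_bdd_above_summable_on) (use partial_sums in \<open>auto intro!: bdd_aboveI2\<close>)
  then show "ell2 (mat_vec A x)" by (simp add: ell2_def)
  show "ell2_normsq (mat_vec A x) \<le> R * R * ell2_normsq x"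
    using infsum_le_finite_sums[OF summable partial_sums] unfolding ell2_normsq_def .
qed

lemma
  assumes "is_metric_nat d"
  shows metric_nonneg: "0 \<le> d i j" and metric_self: "d i i = 0"
    and metric_sym: "d i j = d j i" and metric_triangle: "d i k \<le> d i j + d j k"
  using assms by (auto simp: is_metric_nat_def)

definition exp_decaying :: "(nat \<Rightarrow> nat \<Rightarrow> real) \<Rightarrow> real \<Rightarrow> imat \<Rightarrow> bool" where
  "exp_decaying d \<epsilon> A \<longleftrightarrow> (\<exists>K. \<forall>i j. \<bar>A i j\<bar> \<le> K * exp (- \<epsilon> * d i j))"

lemma exp_decaying_abs_mat [simp]: "exp_decaying d \<epsilon> (abs_mat A) \<longleftrightarrow> exp_decaying d \<epsilon> A"
  by (simp add: exp_decaying_def abs_mat_def)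

lemma bounded_l2_if_exp_decaying:
  assumes d: "is_metric_nat d" and "metric_summable d" "\<epsilon> > 0" "exp_decaying d \<epsilon> A"
  shows "bounded_l2 A"
proof -
  obtain K where K: "\<And>i j. \<bar>A i j\<bar> \<le> K * exp (- \<epsilon> * d i j)"
    using assms(4) by (auto simp: exp_decaying_def)
  define e where "e i j = exp (- \<epsilon> * d i j)" for i j
  have e: "e i summable_on UNIV" "bdd_above (range (\<lambda>i. \<Sum>\<^sub>\<infinity>j. e i j))" for i
    using assms(2,3) by (auto simp: metric_summable_def e_def[abs_def])
  then obtain S where S: "\<And>i. (\<Sum>\<^sub>\<infinity>j. e i j) \<le> S" by (auto simp: bdd_above_def)
  have row_summable: "(\<lambda>j. \<bar>A i j\<bar>) summable_on UNIV" for i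
    by (rule summable_on_comparison_test[OF summable_on_cmult_right[OF e(1)]]) (use K e_def in auto)
  have "0 \<le> K" using K[of 0 0] abs_ge_zero[of "A 0 0"] by (simp add: metric_self[OF d])
  show ?thesis
  proof (rule schur_test[OF row_summable])
    show "(\<Sum>\<^sub>\<infinity>j. \<bar>A i j\<bar>) \<le> K * S" for i
    proof -
      have "(\<Sum>\<^sub>\<infinity>j. \<bar>A i j\<bar>) \<le> (\<Sum>\<^sub>\<infinity>j. K * e i j)"
        by (rule infsum_mono[OF row_summable summable_on_cmult_right[OF e(1)]]) (use K e_def in auto)
      also have "\<dots> = K * (\<Sum>\<^sub>\<infinity>j. e i j)" by (rule infsum_cmult_right) (use e in simp)
      also have "\<dots> \<le> K * S" by (rule mult_left_mono[OF S \<open>0 \<le> K\<close>])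
      finally show ?thesis .
    qed
    show "(\<Sum>i\<in>F. \<bar>A i j\<bar>) \<le> K * S" if "finite F" for j F
    proof -
      have "(\<Sum>i\<in>F. \<bar>A i j\<bar>) \<le> (\<Sum>i\<in>F. K * e j i)"
        by (rule sum_mono) (use K metric_sym[OF d] e_def in metis)
      also have "\<dots> = K * (\<Sum>i\<in>F. e j i)" by (simp add: sum_distrib_left)
      also have "(\<Sum>i\<in>F. e j i) \<le> (\<Sum>\<^sub>\<infinity>i. e j i)"
        by (rule finite_sum_le_infsum[OF e(1) that]) (simp_all add: e_def)
      then have "K * (\<Sum>i\<in>F. e j i) \<le> K * S"
        using S[of j] \<open>0 \<le> K\<close> by (meson mult_left_mono order_trans)
      finally show ?thesis .
    qed
  qed
qed

text \<open>The surplus rate \<open>\<beta> / 2\<close> of the faster factor makes the sum over \<open>m\<close> converge.\<close>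

lemma sum_mult_exp_decay:
  assumes d: "is_metric_nat d" and "0 \<le> \<epsilon>" "\<epsilon> \<le> \<beta> / 2" "0 \<le> a" "0 \<le> b"
    and P: "\<And>m. \<bar>P m\<bar> \<le> a * exp (- \<epsilon> * d i m)"
    and Q: "\<And>m. \<bar>Q m\<bar> \<le> b * exp (- \<beta> * d m j)"
  shows "\<bar>\<Sum>m\<in>F. P m * Q m\<bar> \<le> a * b * exp (- \<epsilon> * d i j) * (\<Sum>m\<in>F. exp (- (\<beta> / 2) * d m j))"
proof -
  have "\<bar>\<Sum>m\<in>F. P m * Q m\<bar> \<le> (\<Sum>m\<in>F. \<bar>P m\<bar> * \<bar>Q m\<bar>)"
    by (rule order.trans[OF sum_abs]) (simp add: abs_mult)
  also have "\<dots> \<le> (\<Sum>m\<in>F. a * b * exp (- \<epsilon> * d i j) * exp (- (\<beta> / 2) * d m j))"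
  proof (rule sum_mono)
    fix m
    have "\<epsilon> * d i j \<le> \<epsilon> * d i m + \<epsilon> * d m j"
      using mult_left_mono[OF metric_triangle[OF d, of i j m] \<open>0 \<le> \<epsilon>\<close>] by (simp add: algebra_simps)
    moreover have "\<epsilon> * d m j \<le> (\<beta> / 2) * d m j"
      using mult_right_mono[OF \<open>\<epsilon> \<le> \<beta> / 2\<close> metric_nonneg[OF d]] by simp
    ultimately have exponent: "- \<epsilon> * d i m + - \<beta> * d m j \<le> - \<epsilon> * d i j + - (\<beta> / 2) * d m j"
      by (simp add: algebra_simps)
    have "\<bar>P m\<bar> * \<bar>Q m\<bar> \<le> (a * exp (- \<epsilon> * d i m)) * (b * exp (- \<beta> * d m j))"
      by (rule mult_mono[OF P Q]) (use \<open>0 \<le> a\<close> in auto)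
    also have "\<dots> = a * b * exp (- \<epsilon> * d i m + - \<beta> * d m j)"
      by (simp only: exp_add mult_ac)
    also have "\<dots> \<le> a * b * exp (- \<epsilon> * d i j + - (\<beta> / 2) * d m j)"
      using exponent \<open>0 \<le> a\<close> \<open>0 \<le> b\<close> by (intro mult_left_mono) auto
    also have "\<dots> = a * b * exp (- \<epsilon> * d i j) * exp (- (\<beta> / 2) * d m j)"
      by (simp only: exp_add mult_ac)
    finally show "\<bar>P m\<bar> * \<bar>Q m\<bar> \<le> a * b * exp (- \<epsilon> * d i j) * exp (- (\<beta> / 2) * d m j)" .
  qed
  also have "\<dots> = a * b * exp (- \<epsilon> * d i j) * (\<Sum>m\<in>F. exp (- (\<beta> / 2) * d m j))"
    by (simp add: sum_distrib_left)
  finally show ?thesis .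
qed

lemma sum_mult_exp_decay':
  assumes d: "is_metric_nat d" and "0 \<le> \<epsilon>" "\<epsilon> \<le> \<beta> / 2" "0 \<le> a" "0 \<le> b"
    and P: "\<And>m. \<bar>P m\<bar> \<le> a * exp (- \<beta> * d i m)"
    and Q: "\<And>m. \<bar>Q m\<bar> \<le> b * exp (- \<epsilon> * d m j)"
  shows "\<bar>\<Sum>m\<in>F. P m * Q m\<bar> \<le> a * b * exp (- \<epsilon> * d i j) * (\<Sum>m\<in>F. exp (- (\<beta> / 2) * d i m))"
  using sum_mult_exp_decay[OF d \<open>0 \<le> \<epsilon>\<close> \<open>\<epsilon> \<le> \<beta> / 2\<close> \<open>0 \<le> b\<close> \<open>0 \<le> a\<close>, of Q j P i F] P Q
  by (simp add: metric_sym[OF d, of _ i] metric_sym[OF d, of j] mult_ac)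

subsection \<open>Decay of solutions of elliptic sections\<close>

lemma abs_one_minus_exp_le: "\<bar>1 - exp s\<bar> \<le> exp \<bar>s\<bar> - 1" for s :: real
proof (cases "0 \<le> s")
  case False
  then have "\<bar>1 - exp s\<bar> = 1 - exp s" "exp \<bar>s\<bar> = exp (- s)" by simp_all
  with exp_ge_add_one_self[of s] exp_ge_add_one_self[of "- s"] show ?thesis by linarith
qed (use exp_ge_add_one_self[of s] in simp)

lemma abs_one_minus_exp_ratio_le:
  assumes d: "is_metric_nat d" and "0 \<le> \<epsilon>"
  shows "\<bar>1 - exp (\<epsilon> * d i l) / exp (\<epsilon> * d j l)\<bar> \<le> exp (\<epsilon> * d i j) - 1"
proof -
  have ratio: "exp (\<epsilon> * d i l) / exp (\<epsilon> * d j l) = exp (\<epsilon> * (d i l - d j l))"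
    by (simp add: exp_diff[symmetric] algebra_simps)
  have "\<bar>d i l - d j l\<bar> \<le> d i j"
    using metric_triangle[OF d, of i l j] metric_triangle[OF d, of j l i] metric_sym[OF d, of j i]
    unfolding abs_le_iff by linarith
  then have "exp \<bar>\<epsilon> * (d i l - d j l)\<bar> \<le> exp (\<epsilon> * d i j)"
    using \<open>0 \<le> \<epsilon>\<close> by (simp add: abs_mult mult_left_mono)
  then show ?thesis
    unfolding ratio using abs_one_minus_exp_le[of "\<epsilon> * (d i l - d j l)"] by linarith
qed

lemma quadratic_form_le_of_row_column_sums:
  fixes E G :: imat and z :: "nat \<Rightarrow> real"
  assumes EG: "\<And>i j. \<bar>E i j\<bar> \<le> G i j"
    and rows: "\<And>i. i \<le> k \<Longrightarrow> (\<Sum>j\<le>k. G i j) \<le> r"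
    and columns: "\<And>j. j \<le> k \<Longrightarrow> (\<Sum>i\<le>k. G i j) \<le> r"
  shows "(\<Sum>i\<le>k. z i * (\<Sum>j\<le>k. E i j * z j)) \<le> r * (\<Sum>i\<le>k. (z i)\<^sup>2)"
proof -
  have "(\<Sum>i\<le>k. z i * (\<Sum>j\<le>k. E i j * z j))
      \<le> (\<Sum>i\<le>k. \<Sum>j\<le>k. G i j * (z i)\<^sup>2 / 2 + G i j * (z j)\<^sup>2 / 2)"
    unfolding sum_distrib_left
  proof (intro sum_mono)
    fix i j
    have "\<bar>z i\<bar> * \<bar>z j\<bar> \<le> ((z i)\<^sup>2 + (z j)\<^sup>2) / 2"
      using sum_squares_bound[of "\<bar>z i\<bar>" "\<bar>z j\<bar>"] by simp
    then have "\<bar>E i j\<bar> * (\<bar>z i\<bar> * \<bar>z j\<bar>) \<le> G i j * (((z i)\<^sup>2 + (z j)\<^sup>2) / 2)"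
      by (rule mult_mono[OF EG]) (use order_trans[OF abs_ge_zero EG] in auto)
    moreover have "z i * (E i j * z j) \<le> \<bar>E i j\<bar> * (\<bar>z i\<bar> * \<bar>z j\<bar>)"
      by (metis abs_ge_self abs_mult mult.left_commute)
    ultimately show "z i * (E i j * z j) \<le> G i j * (z i)\<^sup>2 / 2 + G i j * (z j)\<^sup>2 / 2"
      by (simp add: field_simps)
  qed
  also have "\<dots> = (\<Sum>i\<le>k. (\<Sum>j\<le>k. G i j) * (z i)\<^sup>2) / 2 + (\<Sum>j\<le>k. (\<Sum>i\<le>k. G i j) * (z j)\<^sup>2) / 2"
  proof -
    have "(\<Sum>i\<le>k. \<Sum>j\<le>k. G i j * (z i)\<^sup>2 / 2) = (\<Sum>i\<le>k. (\<Sum>j\<le>k. G i j) * (z i)\<^sup>2) / 2"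
      by (simp add: sum_divide_distrib sum_distrib_right)
    moreover have "(\<Sum>i\<le>k. \<Sum>j\<le>k. G i j * (z j)\<^sup>2 / 2) = (\<Sum>j\<le>k. (\<Sum>i\<le>k. G i j) * (z j)\<^sup>2) / 2"
      by (subst sum.swap) (simp add: sum_divide_distrib sum_distrib_right)
    ultimately show ?thesis by (simp only: sum.distrib)
  qed
  also have "\<dots> \<le> (\<Sum>i\<le>k. r * (z i)\<^sup>2) / 2 + (\<Sum>j\<le>k. r * (z j)\<^sup>2) / 2"
    by (intro add_mono divide_right_mono sum_mono mult_right_mono) (simp_all add: rows columns)
  also have "\<dots> = r * (\<Sum>i\<le>k. (z i)\<^sup>2)"
    by (simp add: sum_distrib_left[symmetric])
  finally show ?thesis .
qed

lemma abs_le_of_quadratic_bound: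
  fixes z :: "nat \<Rightarrow> real"
  assumes "c > 0" "i0 \<le> k" "i \<le> k" and bound: "c / 2 * (\<Sum>l\<le>k. (z l)\<^sup>2) \<le> z i0"
  shows "\<bar>z i\<bar> \<le> 2 / c"
proof -
  define N where "N = (\<Sum>l\<le>k. (z l)\<^sup>2)"
  have square_le: "(z l)\<^sup>2 \<le> N" if "l \<le> k" for l
    unfolding N_def using that by (intro member_le_sum) auto
  have "z i0 \<le> 2 / c"
  proof (cases "z i0 > 0")
    case True
    have "c / 2 * (z i0)\<^sup>2 \<le> c / 2 * N"
      using square_le[OF \<open>i0 \<le> k\<close>] \<open>c > 0\<close> by simp
    then have "c / 2 * (z i0 * z i0) \<le> 1 * z i0"
      using bound by (simp add: N_def power2_eq_square)
    then have "c / 2 * z i0 \<le> 1"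
      using True by (simp add: mult.assoc[symmetric])
    then show ?thesis using \<open>c > 0\<close> by (simp add: field_simps)
  qed (use \<open>c > 0\<close> in \<open>simp add: not_less order_trans[of _ 0]\<close>)
  with bound have "c / 2 * N \<le> 2 / c" unfolding N_def by linarith
  then have "(c / 2 * N) / (c / 2) \<le> (2 / c) / (c / 2)"
    using \<open>c > 0\<close> by (intro divide_right_mono) auto
  then have "N \<le> (2 / c) / (c / 2)" using \<open>c > 0\<close> by simp
  also have "\<dots> = (2 / c)\<^sup>2" by (simp add: power2_eq_square)
  finally have "\<bar>z i\<bar>\<^sup>2 \<le> (2 / c)\<^sup>2" using square_le[OF \<open>i \<le> k\<close>] by simp
  moreover have "0 \<le> 2 / c" using \<open>c > 0\<close> by simp
  ultimately show ?thesis by (rule power2_le_imp_le)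
qed

text \<open>The Jaffard--Bernstein argument: conjugating the section by the weights
  \<open>exp (\<epsilon> * d i i0)\<close> perturbs it by a matrix \<open>E\<close> whose row and column sums are at most
  \<open>c / 2\<close>, so the weighted solution \<open>z\<close> is still controlled by ellipticity.\<close>

lemma section_solution_decay:
  fixes A G :: imat and y :: "nat \<Rightarrow> real"
  assumes d: "is_metric_nat d" and "c > 0" "0 \<le> \<epsilon>" "i0 \<le> k" "i \<le> k"
    and elliptic: "section_elliptic A k c"
    and solves: "\<And>i. i \<le> k \<Longrightarrow> (\<Sum>j\<le>k. A i j * y j) = (if i = i0 then 1 else 0)"
    and G: "\<And>i j. \<bar>A i j\<bar> * (exp (\<epsilon> * d i j) - 1) \<le> G i j"
    and rows: "\<And>i. i \<le> k \<Longrightarrow> (\<Sum>j\<le>k. G i j) \<le> c / 2"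
    and columns: "\<And>j. j \<le> k \<Longrightarrow> (\<Sum>i\<le>k. G i j) \<le> c / 2"
  shows "\<bar>y i\<bar> \<le> 2 / c * exp (- \<epsilon> * d i i0)"
proof -
  define w where "w i = exp (\<epsilon> * d i i0)" for i
  define z where "z i = w i * y i" for i
  define E where "E i j = A i j * (1 - w i / w j)" for i j
  have EG: "\<bar>E i j\<bar> \<le> G i j" for i j
  proof -
    have "\<bar>E i j\<bar> \<le> \<bar>A i j\<bar> * (exp (\<epsilon> * d i j) - 1)"
      unfolding E_def w_def abs_mult
      by (intro mult_left_mono abs_one_minus_exp_ratio_le[OF d \<open>0 \<le> \<epsilon>\<close>]) simp
    then show ?thesis using G[of i j] by linarith
  qed
  have row: "(\<Sum>j\<le>k. A i j * z j) = (if i = i0 then w i else 0) + (\<Sum>j\<le>k. E i j * z j)"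
    if "i \<le> k" for i
  proof -
    have "E i j * z j = A i j * z j - w i * (A i j * y j)" for j
      by (simp add: E_def z_def w_def field_simps)
    then show ?thesis using solves[OF that] by (simp add: sum_subtractf sum_distrib_left[symmetric])
  qed
  have "(\<Sum>i\<le>k. z i * (if i = i0 then w i else 0)) = (\<Sum>i\<le>k. if i = i0 then z i * w i else 0)"
    by (rule sum.cong) auto
  also have "\<dots> = z i0"
    using \<open>i0 \<le> k\<close> by (simp add: w_def metric_self[OF d])
  finally have "(\<Sum>i\<le>k. z i * (if i = i0 then w i else 0)) = z i0" .
  then have "(\<Sum>i\<le>k. z i * (\<Sum>j\<le>k. A i j * z j)) = z i0 + (\<Sum>i\<le>k. z i * (\<Sum>j\<le>k. E i j * z j))"
    by (simp add: row distrib_left sum.distrib)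
  moreover have "c * (\<Sum>i\<le>k. (z i)\<^sup>2) \<le> (\<Sum>i\<le>k. z i * (\<Sum>j\<le>k. A i j * z j))"
    using elliptic by (simp add: section_elliptic_def)
  moreover have "(\<Sum>i\<le>k. z i * (\<Sum>j\<le>k. E i j * z j)) \<le> c / 2 * (\<Sum>i\<le>k. (z i)\<^sup>2)"
    by (rule quadratic_form_le_of_row_column_sums[OF EG rows columns])
  ultimately have "c / 2 * (\<Sum>i\<le>k. (z i)\<^sup>2) \<le> z i0" by linarith
  then have "\<bar>z i\<bar> \<le> 2 / c" by (rule abs_le_of_quadratic_bound[OF \<open>c > 0\<close> \<open>i0 \<le> k\<close> \<open>i \<le> k\<close>])
  moreover have "\<bar>y i\<bar> = \<bar>z i\<bar> * exp (- \<epsilon> * d i i0)"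
    by (simp add: z_def w_def abs_mult exp_minus field_simps)
  ultimately show ?thesis by (metis exp_ge_zero mult_right_mono)
qed

lemma exp_minus_one_le:
  fixes D \<epsilon> \<rho> :: real
  assumes "0 \<le> D" "0 \<le> \<epsilon>" "0 < \<rho>"
  shows "exp (\<epsilon> * D) - 1 \<le> \<epsilon> / \<rho> * exp ((\<rho> + \<epsilon>) * D)"
proof -
  have "1 - \<epsilon> * D \<le> exp (- (\<epsilon> * D))" using exp_ge_add_one_self[of "- (\<epsilon> * D)"] by simp
  then have "(1 - \<epsilon> * D) * exp (\<epsilon> * D) \<le> 1"
    using mult_right_mono[of _ _ "exp (\<epsilon> * D)"] by (simp add: exp_minus field_simps)
  then have "exp (\<epsilon> * D) - 1 \<le> \<epsilon> * D * exp (\<epsilon> * D)" by (simp add: algebra_simps)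
  also have "\<dots> \<le> \<epsilon> * (exp (\<rho> * D) / \<rho>) * exp (\<epsilon> * D)"
  proof -
    have "\<rho> * D \<le> exp (\<rho> * D)" using exp_ge_add_one_self[of "\<rho> * D"] by linarith
    then have "D \<le> exp (\<rho> * D) / \<rho>" using \<open>0 < \<rho>\<close> by (simp add: field_simps)
    then show ?thesis using \<open>0 \<le> \<epsilon>\<close> by (intro mult_right_mono mult_left_mono) simp_all
  qed
  also have "\<dots> = \<epsilon> / \<rho> * exp ((\<rho> + \<epsilon>) * D)"
    by (simp add: distrib_right exp_add)
  finally show ?thesis .
qed

locale elliptic_exp_decay =
  fixes d :: "nat \<Rightarrow> nat \<Rightarrow> real" and \<beta> C c :: real and M :: imat
  assumes metric: "is_metric_nat d" and summable: "metric_summable d"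
    and rate_pos: "0 < \<beta>" and C_pos: "0 < C"
    and entry_decay: "\<And>i j. \<bar>M i j\<bar> \<le> C * exp (- \<beta> * d i j)"
    and c_pos: "0 < c" and elliptic: "elliptic M c"
begin

definition tail_bound :: real where
  "tail_bound = (SUP i. \<Sum>\<^sub>\<infinity>j. exp (- (\<beta> / 2) * d i j))"

lemma sum_exp_le_tail_bound:
  assumes "finite F"
  shows "(\<Sum>j\<in>F. exp (- (\<beta> / 2) * d i j)) \<le> tail_bound"
proof -
  have "0 < \<beta> / 2" using rate_pos by simp
  with summable have "(\<forall>i. (\<lambda>j. exp (- (\<beta> / 2) * d i j)) summable_on UNIV)
      \<and> bdd_above (range (\<lambda>i. \<Sum>\<^sub>\<infinity>j. exp (- (\<beta> / 2) * d i j)))"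
    unfolding metric_summable_def by (elim allE[of _ "\<beta> / 2"]) simp
  then have summable_row: "(\<lambda>j. exp (- (\<beta> / 2) * d i j)) summable_on UNIV"
    and bounded: "bdd_above (range (\<lambda>i. \<Sum>\<^sub>\<infinity>j. exp (- (\<beta> / 2) * d i j)))"
    by auto
  have "(\<Sum>j\<in>F. exp (- (\<beta> / 2) * d i j)) \<le> (\<Sum>\<^sub>\<infinity>j. exp (- (\<beta> / 2) * d i j))"
    by (rule finite_sum_le_infsum[OF summable_row assms]) simp_all
  also have "\<dots> \<le> tail_bound"
    unfolding tail_bound_def by (rule cSUP_upper[OF UNIV_I bounded])
  finally show ?thesis .
qed

lemma sum_exp_le_tail_bound':
  assumes "finite F"
  shows "(\<Sum>i\<in>F. exp (- (\<beta> / 2) * d i j)) \<le> tail_bound"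
  using sum_exp_le_tail_bound[OF assms, of j] by (simp add: metric_sym[OF metric, of _ j])

lemma tail_bound_ge_one: "1 \<le> tail_bound"
  using sum_exp_le_tail_bound[of "{0}" 0] by (simp add: metric_self[OF metric])

lemma sum_abs_entries_le:
  assumes "finite F"
  shows "(\<Sum>j\<in>F. \<bar>M i j\<bar>) \<le> C * tail_bound"
proof -
  have "\<bar>M i j\<bar> \<le> C * exp (- (\<beta> / 2) * d i j)" for j
  proof -
    have "\<beta> / 2 * d i j \<le> \<beta> * d i j"
      using rate_pos metric_nonneg[OF metric, of i j] by (intro mult_right_mono) simp_all
    then have "exp (- \<beta> * d i j) \<le> exp (- (\<beta> / 2) * d i j)" by simp
    then show ?thesis using entry_decay[of i j] C_pos by (meson mult_left_mono less_imp_le order_trans)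
  qed
  then have "(\<Sum>j\<in>F. \<bar>M i j\<bar>) \<le> C * (\<Sum>j\<in>F. exp (- (\<beta> / 2) * d i j))"
    unfolding sum_distrib_left by (rule sum_mono)
  also have "\<dots> \<le> C * tail_bound"
    using sum_exp_le_tail_bound[OF assms] C_pos by simp
  finally show ?thesis .
qed

text \<open>The second term of the minimum makes the weighted perturbation in
  \<open>section_solution_decay\<close> small.\<close>

definition decay_rate :: real where
  "decay_rate = min (\<beta> / 4) (c * \<beta> / (8 * C * tail_bound))"

lemma decay_rate_pos: "0 < decay_rate"
  using rate_pos c_pos C_pos tail_bound_ge_one by (simp add: decay_rate_def)

lemma decay_rate_le: "decay_rate \<le> \<beta> / 4"
  by (simp add: decay_rate_def)

definition perturbation_bound :: imat where
  "perturbation_bound i j = 4 * C * decay_rate / \<beta> * exp (- (\<beta> / 2) * d i j)"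

lemma perturbation_bound_sym: "perturbation_bound i j = perturbation_bound j i"
  by (simp add: perturbation_bound_def metric_sym[OF metric, of i])

lemma abs_entry_mult_exp_le: "\<bar>M i j\<bar> * (exp (decay_rate * d i j) - 1) \<le> perturbation_bound i j"
proof -
  define D where "D = d i j"
  have "0 \<le> D" using metric_nonneg[OF metric] by (simp add: D_def)
  have "\<bar>M i j\<bar> * (exp (decay_rate * D) - 1)
      \<le> C * exp (- \<beta> * D) * (decay_rate / (\<beta> / 4) * exp ((\<beta> / 4 + decay_rate) * D))"
    using \<open>0 \<le> D\<close> decay_rate_pos rate_pos
    by (intro mult_mono exp_minus_one_le) (use entry_decay[of i j] C_pos in \<open>auto simp: D_def\<close>)
  also have "\<dots> = 4 * C * decay_rate / \<beta> * exp ((\<beta> / 4 + decay_rate - \<beta>) * D)"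
    by (simp add: exp_add[symmetric] algebra_simps)
  also have "\<dots> \<le> perturbation_bound i j"
  proof -
    have "(\<beta> / 4 + decay_rate - \<beta>) * D \<le> - (\<beta> / 2) * D"
      using decay_rate_le \<open>0 \<le> D\<close> by (intro mult_right_mono) simp_all
    then show ?thesis unfolding perturbation_bound_def D_def[symmetric]
      using decay_rate_pos C_pos rate_pos by (intro mult_left_mono) simp_all
  qed
  finally show ?thesis by (simp add: D_def)
qed

lemma sum_perturbation_bound_le:
  assumes "finite F"
  shows "(\<Sum>j\<in>F. perturbation_bound i j) \<le> c / 2"
proof -
  have "(\<Sum>j\<in>F. perturbation_bound i j) = 4 * C * decay_rate / \<beta> * (\<Sum>j\<in>F. exp (- (\<beta> / 2) * d i j))"
    by (simp add: perturbation_bound_def sum_distrib_left)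
  also have "\<dots> \<le> 4 * C * decay_rate / \<beta> * tail_bound"
    by (intro mult_left_mono sum_exp_le_tail_bound[OF assms]) (use C_pos decay_rate_pos rate_pos in simp)
  also have "\<dots> = 4 * C * tail_bound / \<beta> * decay_rate" by simp
  also have "\<dots> \<le> 4 * C * tail_bound / \<beta> * (c * \<beta> / (8 * C * tail_bound))"
    using C_pos rate_pos tail_bound_ge_one by (intro mult_left_mono) (simp_all add: decay_rate_def)
  also have "\<dots> = c / 2"
    using C_pos rate_pos tail_bound_ge_one by simp
  finally show ?thesis .
qed

lemma sum_perturbation_bound_le':
  assumes "finite F"
  shows "(\<Sum>i\<in>F. perturbation_bound i j) \<le> c / 2"
  using sum_perturbation_bound_le[OF assms, of j] by (simp add: perturbation_bound_sym[of _ j])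

abbreviation lower_factor :: imat where "lower_factor \<equiv> doolittle_lower M"
abbreviation upper_factor :: imat where "upper_factor \<equiv> doolittle_upper M"
abbreviation lower_factor_inv :: imat where "lower_factor_inv \<equiv> lower_inverse lower_factor"
abbreviation upper_factor_inv :: imat where "upper_factor_inv \<equiv> upper_inverse upper_factor"

lemma pivot_ge: "c \<le> doolittle M k k"
  by (rule doolittle_pivot_ge[OF elliptic c_pos])

lemma pivot_nonzero: "doolittle M k k \<noteq> 0"
  using pivot_ge[of k] c_pos by auto

lemma factorization: "M = mat_mult lower_factor upper_factor"
  by (rule doolittle_factorization[OF pivot_nonzero])

lemma lower_factor_inverse:
  "mat_mult lower_factor lower_factor_inv = id_mat" "mat_mult lower_factor_inv lower_factor = id_mat"
proof -
  show right: "mat_mult lower_factor lower_factor_inv = id_mat"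
    by (rule mat_mult_lower_inverse[OF lower_tri_doolittle_lower]) simp
  show "mat_mult lower_factor_inv lower_factor = id_mat"
    by (rule lower_tri_inverse_commute[OF lower_tri_doolittle_lower lower_tri_lower_inverse right])
qed

lemma upper_factor_inverse:
  "mat_mult upper_factor upper_factor_inv = id_mat" "mat_mult upper_factor_inv upper_factor = id_mat"
proof -
  show right: "mat_mult upper_factor upper_factor_inv = id_mat"
    by (rule mat_mult_upper_inverse[OF upper_tri_doolittle_upper]) (simp add: pivot_nonzero)
  show "mat_mult upper_factor_inv upper_factor = id_mat"
    by (rule upper_tri_inverse_commute[OF upper_tri_doolittle_upper upper_tri_upper_inverse right])
qed

lemma lower_factor_eq: "lower_factor = mat_mult M upper_factor_inv"
  by (subst factorization)
    (simp add: mat_mult_assoc_upper_tri upper_tri_doolittle_upper upper_tri_upper_inverse upper_factor_inverse)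

lemma upper_factor_eq: "upper_factor = mat_mult lower_factor_inv M"
  by (subst factorization)
    (simp add: mat_mult_assoc_lower_tri[symmetric] lower_tri_doolittle_lower lower_tri_lower_inverse lower_factor_inverse)

lemma upper_factor_inv_column:
  assumes "i \<le> k"
  shows "(\<Sum>l\<le>k. M i l * upper_factor_inv l k) = (if i = k then 1 else 0)"
proof -
  have "(\<Sum>l\<le>k. M i l * upper_factor_inv l k) = lower_factor i k"
    by (subst lower_factor_eq) (simp add: mat_mult_upper_tri[OF upper_tri_upper_inverse])
  then show ?thesis using assms by (simp add: doolittle_lower_def)
qed

lemma lower_factor_inv_row:
  assumes "a \<le> i"
  shows "(\<Sum>l\<le>i. lower_factor_inv i l * M l a) = (if a = i then doolittle M i i else 0)"
proof -
  have "(\<Sum>l\<le>i. lower_factor_inv i l * M l a) = upper_factor i a"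
    by (subst upper_factor_eq) (simp add: mat_mult_lower_tri[OF lower_tri_lower_inverse])
  then show ?thesis using assms by (simp add: doolittle_upper_def)
qed

lemma upper_factor_inv_decay: "\<bar>upper_factor_inv i j\<bar> \<le> 2 / c * exp (- decay_rate * d i j)"
proof (cases "i \<le> j")
  case True
  show ?thesis
    by (rule section_solution_decay[OF metric c_pos less_imp_le[OF decay_rate_pos] order_refl True
          elliptic_imp_section_elliptic[OF elliptic] upper_factor_inv_column abs_entry_mult_exp_le
          sum_perturbation_bound_le[OF finite_atMost] sum_perturbation_bound_le'[OF finite_atMost]])
next
  case False
  then have "upper_factor_inv i j = 0"
    using upper_tri_upper_inverse by (simp add: upper_tri_def)
  then show ?thesis using c_pos by simp
qed

text \<open>Upper bound for the pivots: the \<open>k\<close>-th column of the inverse upper factor solves the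
  \<open>k\<close>-th section system, has \<open>k\<close>-th entry \<open>1 / doolittle M k k\<close>, and is small by ellipticity;
  pairing it with the \<open>k\<close>-th row of \<open>M\<close> gives \<open>1\<close>.\<close>

lemma pivot_le: "doolittle M k k \<le> (C * tail_bound)\<^sup>2 / c"
proof -
  define y where "y l = upper_factor_inv l k" for l
  define t where "t = 1 / doolittle M k k"
  have "y k = t" by (simp add: y_def t_def upper_inverse_def)
  have "0 < t" using pivot_ge[of k] c_pos by (simp add: t_def)
  have "(\<Sum>i\<le>k. y i * (\<Sum>l\<le>k. M i l * y l)) = (\<Sum>i\<le>k. if i = k then y i else 0)"
    using upper_factor_inv_column by (intro sum.cong) (auto simp: y_def)
  also have "\<dots> = t" using \<open>y k = t\<close> by simp
  finally have form: "(\<Sum>i\<le>k. y i * (\<Sum>l\<le>k. M i l * y l)) = t" .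
  have "c * (\<Sum>i\<le>k. (y i)\<^sup>2) \<le> (\<Sum>i\<le>k. y i * (\<Sum>l\<le>k. M i l * y l))"
    using elliptic_imp_section_elliptic[OF elliptic, of k] unfolding section_elliptic_def by blast
  then have "c * (\<Sum>i\<le>k. (y i)\<^sup>2) \<le> t" using form by simp
  then have y_le: "\<bar>y l\<bar> \<le> sqrt (t / c)" if "l \<le> k" for l
  proof -
    have "(y l)\<^sup>2 \<le> (\<Sum>i\<le>k. (y i)\<^sup>2)" using that by (intro member_le_sum) auto
    then have "c * (y l)\<^sup>2 \<le> c * (\<Sum>i\<le>k. (y i)\<^sup>2)" using c_pos by simp
    then have "c * (y l)\<^sup>2 \<le> t" using \<open>c * (\<Sum>i\<le>k. (y i)\<^sup>2) \<le> t\<close> by linarith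
    then have "\<bar>y l\<bar>\<^sup>2 \<le> t / c"
      using c_pos by (simp add: pos_le_divide_eq mult.commute)
    then show ?thesis by (rule real_le_rsqrt)
  qed
  have "1 = (\<Sum>l\<le>k. M k l * y l)" using upper_factor_inv_column[of k k] by (simp add: y_def)
  also have "\<dots> \<le> (\<Sum>l\<le>k. \<bar>M k l\<bar> * sqrt (t / c))"
  proof (rule sum_mono)
    fix l assume "l \<in> {..k}"
    then have "\<bar>M k l\<bar> * \<bar>y l\<bar> \<le> \<bar>M k l\<bar> * sqrt (t / c)" using y_le by (simp add: mult_left_mono)
    then show "M k l * y l \<le> \<bar>M k l\<bar> * sqrt (t / c)" by (metis abs_ge_self abs_mult order_trans)
  qed
  also have "\<dots> = (\<Sum>l\<le>k. \<bar>M k l\<bar>) * sqrt (t / c)" by (simp add: sum_distrib_right)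
  also have "\<dots> \<le> C * tail_bound * sqrt (t / c)"
    by (rule mult_right_mono[OF sum_abs_entries_le]) (use \<open>0 < t\<close> c_pos in simp_all)
  finally have "1\<^sup>2 \<le> (C * tail_bound * sqrt (t / c))\<^sup>2" by (rule power_mono) simp
  then have "1 \<le> (C * tail_bound)\<^sup>2 * t / c"
    using \<open>0 < t\<close> c_pos by (simp add: power_mult_distrib)
  then show ?thesis using \<open>0 < t\<close> c_pos pivot_ge[of k] by (simp add: t_def field_simps)
qed

lemma lower_factor_inv_decay:
  "\<bar>lower_factor_inv i j\<bar> \<le> (C * tail_bound)\<^sup>2 / c * (2 / c) * exp (- decay_rate * d i j)"
proof (cases "j \<le> i")
  case True
  define z where "z l = lower_factor_inv i l / doolittle M i i" for l
  have solves: "(\<Sum>l\<le>i. mat_transpose M a l * z l) = (if a = i then 1 else 0)" if "a \<le> i" for a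
    using lower_factor_inv_row[OF that] pivot_nonzero[of i]
    by (simp add: z_def mat_transpose_def sum_divide_distrib[symmetric] mult.commute)
  have perturbation: "\<bar>mat_transpose M a b\<bar> * (exp (decay_rate * d a b) - 1) \<le> perturbation_bound a b"
    for a b
    using abs_entry_mult_exp_le[of b a]
    by (simp add: mat_transpose_def metric_sym[OF metric, of b a] perturbation_bound_sym[of b a])
  have z_decay: "\<bar>z j\<bar> \<le> 2 / c * exp (- decay_rate * d j i)"
    by (rule section_solution_decay[OF metric c_pos less_imp_le[OF decay_rate_pos] order_refl True
          section_elliptic_transpose[OF elliptic_imp_section_elliptic[OF elliptic]] solves perturbation
          sum_perturbation_bound_le[OF finite_atMost] sum_perturbation_bound_le'[OF finite_atMost]])
  have "\<bar>lower_factor_inv i j\<bar> = doolittle M i i * \<bar>z j\<bar>"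
    using pivot_ge[of i] c_pos by (simp add: z_def abs_divide)
  also have "\<dots> \<le> (C * tail_bound)\<^sup>2 / c * (2 / c * exp (- decay_rate * d j i))"
    by (rule mult_mono[OF pivot_le z_decay]) (use pivot_ge[of i] c_pos in simp_all)
  finally show ?thesis by (simp add: metric_sym[OF metric, of j i] mult.assoc)
next
  case False
  then have "lower_factor_inv i j = 0"
    using lower_tri_lower_inverse by (simp add: lower_tri_def)
  then show ?thesis using c_pos by simp
qed

lemma lower_factor_inv_exp_decaying: "exp_decaying d decay_rate lower_factor_inv"
  unfolding exp_decaying_def using lower_factor_inv_decay by blast

lemma upper_factor_inv_exp_decaying: "exp_decaying d decay_rate upper_factor_inv"
  unfolding exp_decaying_def using upper_factor_inv_decay by blast

lemma lower_factor_exp_decaying: "exp_decaying d decay_rate lower_factor"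
proof -
  have "\<bar>lower_factor i j\<bar> \<le> C * (2 / c) * tail_bound * exp (- decay_rate * d i j)" for i j
  proof -
    have "\<bar>lower_factor i j\<bar> = \<bar>\<Sum>m\<le>j. M i m * upper_factor_inv m j\<bar>"
      by (subst lower_factor_eq) (simp add: mat_mult_upper_tri[OF upper_tri_upper_inverse])
    also have "\<dots> \<le> C * (2 / c) * exp (- decay_rate * d i j) * (\<Sum>m\<le>j. exp (- (\<beta> / 2) * d i m))"
      by (rule sum_mult_exp_decay'[OF metric less_imp_le[OF decay_rate_pos] _ _ _ entry_decay
            upper_factor_inv_decay])
        (use decay_rate_le rate_pos C_pos c_pos in simp_all)
    also have "\<dots> \<le> C * (2 / c) * exp (- decay_rate * d i j) * tail_bound"
      by (rule mult_left_mono[OF sum_exp_le_tail_bound[OF finite_atMost]]) (use C_pos c_pos in simp)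
    finally show ?thesis by (simp add: mult_ac)
  qed
  then show ?thesis unfolding exp_decaying_def by blast
qed

lemma upper_factor_exp_decaying: "exp_decaying d decay_rate upper_factor"
proof -
  let ?a = "(C * tail_bound)\<^sup>2 / c * (2 / c)"
  have "\<bar>upper_factor i j\<bar> \<le> ?a * C * tail_bound * exp (- decay_rate * d i j)" for i j
  proof -
    have "\<bar>upper_factor i j\<bar> = \<bar>\<Sum>m\<le>i. lower_factor_inv i m * M m j\<bar>"
      by (subst upper_factor_eq) (simp add: mat_mult_lower_tri[OF lower_tri_lower_inverse])
    also have "\<dots> \<le> ?a * C * exp (- decay_rate * d i j) * (\<Sum>m\<le>i. exp (- (\<beta> / 2) * d m j))"
      by (rule sum_mult_exp_decay[OF metric less_imp_le[OF decay_rate_pos] _ _ _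
            lower_factor_inv_decay entry_decay])
        (use decay_rate_le rate_pos C_pos c_pos in simp_all)
    also have "\<dots> \<le> ?a * C * exp (- decay_rate * d i j) * tail_bound"
      by (rule mult_left_mono[OF sum_exp_le_tail_bound'[OF finite_atMost]]) (use C_pos c_pos in simp)
    finally show ?thesis by (simp add: mult_ac)
  qed
  then show ?thesis unfolding exp_decaying_def by blast
qed

end

theorem theorem3p11:
  fixes d :: "nat \<Rightarrow> nat \<Rightarrow> real" and \<gamma> C_ell :: real and M :: imat
  assumes "is_metric_nat d"
    and "metric_summable d"
    and "\<gamma> > 0"
    and "jaffard d \<gamma> M"
    and "C_ell > 0"
    and "elliptic M C_ell"
  shows "\<exists>L U Linv Uinv.
           lower_tri L \<and> upper_tri U \<and> M = mat_mult L U \<and>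
           lower_tri Linv \<and> mat_mult L Linv = id_mat \<and> mat_mult Linv L = id_mat \<and>
           upper_tri Uinv \<and> mat_mult U Uinv = id_mat \<and> mat_mult Uinv U = id_mat \<and>
           bounded_l2 (abs_mat L) \<and> bounded_l2 (abs_mat U) \<and>
           bounded_l2 (abs_mat Linv) \<and> bounded_l2 (abs_mat Uinv)"
proof -
  have "0 < \<gamma> / 2 \<and> \<gamma> / 2 < \<gamma>" using \<open>\<gamma> > 0\<close> by simp
  then obtain C where "C > 0" "\<And>i j. \<bar>M i j\<bar> \<le> C * exp (- (\<gamma> / 2) * d i j)"
    using \<open>jaffard d \<gamma> M\<close> unfolding jaffard_def by blast
  then interpret elliptic_exp_decay d "\<gamma> / 2" C C_ell M
    using assms by unfold_locales auto
  have bounded: "bounded_l2 (abs_mat A)" if "exp_decaying d decay_rate A" for A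
    using bounded_l2_if_exp_decaying[OF \<open>is_metric_nat d\<close> \<open>metric_summable d\<close> decay_rate_pos] that
    by simp
  show ?thesis
    using factorization lower_factor_inverse upper_factor_inverse
      lower_tri_doolittle_lower upper_tri_doolittle_upper lower_tri_lower_inverse upper_tri_upper_inverse
      bounded[OF lower_factor_exp_decaying] bounded[OF upper_factor_exp_decaying]
      bounded[OF lower_factor_inv_exp_decaying] bounded[OF upper_factor_inv_exp_decaying]
    by blast
qed

end
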